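(* Let $U$ be a set of tokens, let $\phi$ be drawn from an LSH family on $U$, and for $x,y\in U$ let $\zeta(x,y)=\Pr(\phi(x)=\phi(y))$. Let $m,\eta,L\in\mathbf{N}$. Consider a standard partitioned Bloom filter of total range $m$ with $\eta$ independent hash repetitions, where the $j$-th repetition uses its own block of range $m/\eta$ and the IDL hash function $\psi_j(x)=\rho_1^{(j)}(\phi_j(x))+\rho_2^{(j)}(x)$, with $\phi_j$ an independent copy of the LSH function $\phi$, $\rho_1^{(j)}$ a random hash function with range $[m/\eta]$, and $\rho_2^{(j)}$ a random hash function with range $[L]$ (all drawn independently). Suppose the filter is built by inserting a sequence of tokens $x_1,\dots,x_n\in U$, and let $q\in U$ be a query token not among the inserted tokens. Assume: (A1) there is $w_1\in\mathbf{N}$ such that $\zeta(x_i,x_j)=0$ whenever $|i-j|\ge w_1$; (A2) $|\{x_i : \zeta(q,x_i)>0\}|\le w_2$. Then the false positive rate $\epsilon$ for $q$ (the probability that all $\eta$ bits queried for $q$ are set) satisfies $$\epsilon\le\left(w_2\left(\frac{1}{L}+\frac{\eta}{m}\right)+2\left(1-\left(1-\frac{w_1\eta}{m}\right)^{\frac{n}{2w_1}}\right)\right)^{\eta}\approx\left(w_2\left(\frac{1}{L}+\frac{\eta}{m}\right)+2\left(1-e^{-\frac{\eta n}{2m}}\right)\right)^{\eta}.$$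
   Context: $[m]=\{0,\dots,m-1\}$. A random hash function with range $[r]$ maps keys (pairwise) independently and uniformly into $[r]$. A Bloom filter is a bit array, initially all zeros; inserting a token sets the bits at the locations given by each of the $\eta$ hash functions to 1; a query token is reported present iff all its $\eta$ hashed bits are 1. In a partitioned Bloom filter of total range $m$, the array is split into $\eta$ blocks of size $m/\eta$ and the $j$-th hash function addresses only the $j$-th block. A false positive occurs when a token that was not inserted is reported present. *)

theory Defs
  imports "HOL-Probability.Probability"
begin

definition zeta :: "('u \<Rightarrow> 'h) pmf \<Rightarrow> 'u \<Rightarrow> 'u \<Rightarrow> real" where
  "zeta Phi x y = measure_pmf.prob Phi {\<phi>. \<phi> x = \<phi> y}"

definition idl_hash :: "nat \<Rightarrow> ('u \<Rightarrow> 'h) \<times> ('h \<Rightarrow> nat) \<times> ('u \<Rightarrow> nat) \<Rightarrow> 'u \<Rightarrow> nat" where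
  "idl_hash b h x = (case h of (\<phi>, \<rho>1, \<rho>2) \<Rightarrow> (\<rho>1 (\<phi> x) + \<rho>2 x) mod b)"

text \<open>The random functions are sampled on the relevant
  (finite) key set S of tokens, resp. on phi ` S; this has the same distribution on those keys
  as a fully random function.\<close>
definition idl_rep_pmf ::
  "('u \<Rightarrow> 'h) pmf \<Rightarrow> nat \<Rightarrow> nat \<Rightarrow> 'u set \<Rightarrow> (('u \<Rightarrow> 'h) \<times> ('h \<Rightarrow> nat) \<times> ('u \<Rightarrow> nat)) pmf" where
  "idl_rep_pmf Phi b L S =
     do { \<phi> \<leftarrow> Phi;
          \<rho>1 \<leftarrow> Pi_pmf (\<phi> ` S) 0 (\<lambda>_. pmf_of_set {..<b});
          \<rho>2 \<leftarrow> Pi_pmf S 0 (\<lambda>_. pmf_of_set {..<L});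
          return_pmf (\<phi>, \<rho>1, \<rho>2) }"

definition idl_filter_pmf ::
  "('u \<Rightarrow> 'h) pmf \<Rightarrow> nat \<Rightarrow> nat \<Rightarrow> nat \<Rightarrow> 'u set \<Rightarrow>
     (nat \<Rightarrow> ('u \<Rightarrow> 'h) \<times> ('h \<Rightarrow> nat) \<times> ('u \<Rightarrow> nat)) pmf" where
  "idl_filter_pmf Phi m \<eta> L S = Pi_pmf {..<\<eta>} undefined (\<lambda>_. idl_rep_pmf Phi (m div \<eta>) L S)"

definition bloom_bits ::
  "nat \<Rightarrow> nat \<Rightarrow> (nat \<Rightarrow> ('u \<Rightarrow> 'h) \<times> ('h \<Rightarrow> nat) \<times> ('u \<Rightarrow> nat)) \<Rightarrow> 'u list \<Rightarrow> (nat \<times> nat) set" where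
  "bloom_bits m \<eta> hs xs = {(j, idl_hash (m div \<eta>) (hs j) x) | j x. j < \<eta> \<and> x \<in> set xs}"

definition bloom_query ::
  "nat \<Rightarrow> nat \<Rightarrow> (nat \<Rightarrow> ('u \<Rightarrow> 'h) \<times> ('h \<Rightarrow> nat) \<times> ('u \<Rightarrow> nat)) \<Rightarrow> 'u list \<Rightarrow> 'u \<Rightarrow> bool" where
  "bloom_query m \<eta> hs xs q = (\<forall>j<\<eta>. (j, idl_hash (m div \<eta>) (hs j) q) \<in> bloom_bits m \<eta> hs xs)"

definition idl_fp_rate :: "('u \<Rightarrow> 'h) pmf \<Rightarrow> nat \<Rightarrow> nat \<Rightarrow> nat \<Rightarrow> 'u list \<Rightarrow> 'u \<Rightarrow> real" where
  "idl_fp_rate Phi m \<eta> L xs q =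
     measure_pmf.prob (idl_filter_pmf Phi m \<eta> L (insert q (set xs))) {hs. bloom_query m \<eta> hs xs q}"

end

theory Submission
  imports Defs
begin

(* The repetitions are independent, so the false positive rate is the eta-th power of the
   probability that in a single block q is hashed to the position of some inserted token.
   Each inserted token x with zeta(q, x) > 0 (at most w2 of them) collides with q with
   probability at most 1/L + eta/m, already because of the random offset rho2(q).
   For the remaining tokens phi(x) <> phi(q) almost surely, so given phi and rho2 the values
   of rho1 on their LSH buckets are independent, uniform, and independent of psi(q).
   By (A1) a bucket contains at most w1 of these tokens, and a bucket with k of them misses
   psi(q) with probability at least 1 - k eta/m >= (1 - w1 eta/m)^(k/w1).  The product over the
   buckets is y^2 with y = (1 - w1 eta/m)^(n/(2 w1)), and 1 - y^2 <= 2 (1 - y). *)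

lemma measure_bind_pmf_le:
  assumes "\<And>x. x \<in> set_pmf p \<Longrightarrow> measure_pmf.prob (f x) A \<le> c"
  shows "measure_pmf.prob (bind_pmf p f) A \<le> c"
proof -
  obtain x0 where "x0 \<in> set_pmf p" using set_pmf_not_empty[of p] by blast
  then have "0 \<le> c" using assms measure_nonneg order_trans by blast
  have "emeasure (measure_pmf (bind_pmf p f)) A = (\<integral>\<^sup>+x. emeasure (measure_pmf (f x)) A \<partial>measure_pmf p)"
    by simp
  also have "\<dots> \<le> (\<integral>\<^sup>+x. ennreal c \<partial>measure_pmf p)"
    by (intro nn_integral_mono_AE)
      (auto simp: AE_measure_pmf_iff measure_pmf.emeasure_eq_measure assms intro!: ennreal_leI)
  also have "\<dots> = ennreal c" by (simp add: measure_pmf.emeasure_space_1)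
  finally show ?thesis using \<open>0 \<le> c\<close> by (simp add: measure_pmf.emeasure_eq_measure)
qed

lemma Pi_pmf_split_coordinate:
  assumes "finite A" "a \<in> A"
  shows "Pi_pmf A d p = do {y \<leftarrow> p a; map_pmf (\<lambda>f. f(a := y)) (Pi_pmf (A - {a}) d p)}"
proof -
  have "A = insert a (A - {a})" using assms by blast
  then have "Pi_pmf A d p = do {y \<leftarrow> p a; f \<leftarrow> Pi_pmf (A - {a}) d p; return_pmf (f(a := y))}"
    by (metis Pi_pmf_insert' assms(1) finite_Diff Diff_iff insertI1)
  then show ?thesis by (simp add: map_pmf_def)
qed

lemma measure_Pi_pmf_le_given_coordinate:
  assumes "finite A" "a \<in> A"
    and "\<And>y. y \<in> set_pmf (p a) \<Longrightarrow> measure_pmf.prob (Pi_pmf (A - {a}) d p) {f. f(a := y) \<in> X} \<le> c"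
  shows "measure_pmf.prob (Pi_pmf A d p) X \<le> c"
  unfolding Pi_pmf_split_coordinate[OF assms(1,2)]
  by (rule measure_bind_pmf_le) (use assms(3) in \<open>auto simp: vimage_def\<close>)

lemma measure_Pi_pmf_le_given_other_coordinates:
  assumes "finite A" "a \<in> A"
    and "\<And>f. measure_pmf.prob (p a) {y. f(a := y) \<in> X} \<le> c"
  shows "measure_pmf.prob (Pi_pmf A d p) X \<le> c"
  unfolding Pi_pmf_split_coordinate[OF assms(1,2)] map_pmf_def bind_commute_pmf[of "p a"]
  by (rule measure_bind_pmf_le) (use assms(3) in \<open>auto simp: vimage_def simp flip: map_pmf_def\<close>)

lemma card_residue_class_lessThan_le:
  fixes b c e L :: nat
  shows "card {y. y < L \<and> (c + y) mod b = e} \<le> (L - 1) div b + 1"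
proof -
  let ?Y = "{y. y < L \<and> (c + y) mod b = e}"
  have "inj_on (\<lambda>y. y div b) ?Y"
  proof (rule inj_onI)
    fix y1 y2 assume "y1 \<in> ?Y" "y2 \<in> ?Y" and div: "y1 div b = y2 div b"
    then have "(c + y1) mod b = (c + y2) mod b" by simp
    then have "y1 mod b = y2 mod b" by (simp add: add.assoc nat_mod_eq_iff)
    then show "y1 = y2" using div by (metis div_mult_mod_eq)
  qed
  moreover have "(\<lambda>y. y div b) ` ?Y \<subseteq> {..(L - 1) div b}"
    by (auto intro: div_le_mono)
  ultimately have "card ?Y \<le> card {..(L - 1) div b}"
    by (intro card_inj_on_le) simp_all
  then show ?thesis by simp
qed

lemma prob_uniform_residue_class_le:
  fixes b c e L :: nat
  assumes "L > 0" "b > 0"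
  shows "measure_pmf.prob (pmf_of_set {..<L}) {y. (c + y) mod b = e} \<le> 1 / real b + 1 / real L"
proof -
  have "measure_pmf.prob (pmf_of_set {..<L}) {y. (c + y) mod b = e}
      = card {y. y < L \<and> (c + y) mod b = e} / real L"
    using assms by (subst measure_pmf_of_set) (auto intro!: arg_cong[where f=card])
  also have "\<dots> \<le> real ((L - 1) div b + 1) / real L"
    by (intro divide_right_mono) (simp_all only: of_nat_le_iff card_residue_class_lessThan_le of_nat_0_le_iff)
  also have "\<dots> \<le> 1 / real b + 1 / real L"
  proof -
    have "(L - 1) div b * b \<le> L" using div_times_less_eq_dividend[of "L - 1" b] by linarith
    then have "real ((L - 1) div b) * real b \<le> real L" by (metis of_nat_le_iff of_nat_mult)
    then have "real ((L - 1) div b) / real L \<le> 1 / real b" using assms by (simp add: field_simps)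
    then show ?thesis by (simp add: add_divide_distrib)
  qed
  finally show ?thesis .
qed

lemma prob_uniform_avoids_shifts_ge:
  fixes r :: "'a \<Rightarrow> nat"
  assumes "finite G" "b > 0"
  shows "1 - real (card G) / real b \<le> measure_pmf.prob (pmf_of_set {..<b}) {z. \<forall>x\<in>G. (z + r x) mod b \<noteq> l}"
proof -
  define Miss where "Miss = {z. z < b \<and> (\<forall>x\<in>G. (z + r x) mod b \<noteq> l)}"
  define Hit where "Hit = (\<lambda>x. {z. z < b \<and> (r x + z) mod b = l})"
  have "card {..<b} \<le> card (Miss \<union> (\<Union>x\<in>G. Hit x))"
    by (intro card_mono) (auto simp: Miss_def Hit_def assms add.commute)
  also have "\<dots> \<le> card Miss + (\<Sum>x\<in>G. card (Hit x))"
    using card_Un_le card_UN_le[OF assms(1)] add_left_mono order_trans by blast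
  also have "(\<Sum>x\<in>G. card (Hit x)) \<le> (\<Sum>x\<in>G. 1)"
  proof (intro sum_mono)
    fix x
    have "(b - 1) div b = 0" using assms(2) by simp
    then show "card (Hit x) \<le> 1" using card_residue_class_lessThan_le[of b "r x" b l] by (simp add: Hit_def)
  qed
  finally have "b \<le> card Miss + card G" by simp
  moreover have "measure_pmf.prob (pmf_of_set {..<b}) {z. \<forall>x\<in>G. (z + r x) mod b \<noteq> l} = card Miss / b"
    using assms by (subst measure_pmf_of_set) (auto simp: Miss_def intro!: arg_cong[where f=card])
  ultimately show ?thesis using assms by (simp add: field_simps)
qed

lemma powr_le_tangent_at_1:
  fixes x a :: real
  assumes "0 < x" "0 \<le> a" "a \<le> 1"
  shows "x powr a \<le> 1 + a * (x - 1)"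
  using Youngs_inequality_0[of a "1 - a" x 1] assms by (simp add: algebra_simps)

lemma prob_uniform_function_hits_le:
  fixes \<phi> :: "'u \<Rightarrow> 'h" and r :: "'u \<Rightarrow> nat"
  assumes "finite A" "finite X" "\<phi> ` X \<subseteq> A" "0 < w" "w \<le> b"
    and bucket: "\<And>v. card {x\<in>X. \<phi> x = v} \<le> w"
  shows "measure_pmf.prob (Pi_pmf A 0 (\<lambda>_. pmf_of_set {..<b})) {g. \<exists>x\<in>X. (g (\<phi> x) + r x) mod b = l}
     \<le> 1 - (1 - real w / real b) powr (real (card X) / real w)"
    (is "measure_pmf.prob ?P ?Hit \<le> _")
proof (cases "w = b")
  case True
  then show ?thesis using assms(4) by simp
next
  case False
  define Bucket where "Bucket v = {x\<in>X. \<phi> x = v}" for v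
  define Miss where "Miss v = {z. \<forall>x\<in>Bucket v. (z + r x) mod b \<noteq> l}" for v
  define t where "t = real w / real b"
  have "b > 0" "0 < 1 - t" using assms(4,5) False by (auto simp: t_def)
  have bucket_miss: "(1 - t) powr (real (card (Bucket v)) / real w)
      \<le> measure_pmf.prob (pmf_of_set {..<b}) (Miss v)" for v
  proof -
    have "(1 - t) powr (real (card (Bucket v)) / real w)
        \<le> 1 + real (card (Bucket v)) / real w * ((1 - t) - 1)"
      using bucket[of v] assms(4) \<open>0 < 1 - t\<close> by (intro powr_le_tangent_at_1) (auto simp: Bucket_def)
    also have "\<dots> = 1 - real (card (Bucket v)) / real b"
      using assms(4) by (simp add: t_def field_simps)
    also have "\<dots> \<le> measure_pmf.prob (pmf_of_set {..<b}) (Miss v)"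
      unfolding Miss_def using assms(2) \<open>b > 0\<close>
      by (intro prob_uniform_avoids_shifts_ge) (auto simp: Bucket_def)
    finally show ?thesis .
  qed
  have "card X = card (\<Union>v\<in>A. Bucket v)"
    using assms(3) by (intro arg_cong[where f=card]) (auto simp: Bucket_def)
  also have "\<dots> = (\<Sum>v\<in>A. card (Bucket v))"
    using assms(1,2) by (intro card_UN_disjoint) (auto simp: Bucket_def)
  finally have "(1 - t) powr (real (card X) / real w)
      = (\<Prod>v\<in>A. (1 - t) powr (real (card (Bucket v)) / real w))"
    using \<open>0 < 1 - t\<close> by (simp add: sum_divide_distrib powr_sum)
  also have "\<dots> \<le> (\<Prod>v\<in>A. measure_pmf.prob (pmf_of_set {..<b}) (Miss v))"
    by (intro prod_mono conjI powr_ge_zero bucket_miss)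
  also have "\<dots> = measure_pmf.prob ?P (PiE_dflt A 0 Miss)"
    by (rule measure_Pi_pmf_PiE_dflt[symmetric]) (rule assms(1))
  also have "\<dots> \<le> measure_pmf.prob ?P (- ?Hit)"
    using assms(3) by (intro measure_pmf.finite_measure_mono) (auto simp: PiE_dflt_def Miss_def Bucket_def)
  also have "\<dots> = 1 - measure_pmf.prob ?P ?Hit"
    using measure_pmf.prob_compl[of ?Hit ?P] by (simp add: Compl_eq_Diff_UNIV)
  finally show ?thesis by (simp add: t_def)
qed

lemma prob_idl_hash_collision_le:
  fixes Phi :: "('u \<Rightarrow> 'h) pmf"
  assumes "finite S" "q \<in> S" "x \<noteq> q" "b > 0" "L > 0"
  shows "measure_pmf.prob (idl_rep_pmf Phi b L S) {h. idl_hash b h q = idl_hash b h x}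
    \<le> 1 / real b + 1 / real L"
  (is "measure_pmf.prob _ ?E \<le> ?c")
  unfolding idl_rep_pmf_def
proof (rule measure_bind_pmf_le, rule measure_bind_pmf_le)
  fix \<phi> :: "'u \<Rightarrow> 'h" and \<rho>1 :: "'h \<Rightarrow> nat"
  have "measure_pmf.prob (pmf_of_set {..<L}) {y. f(q := y) \<in> (\<lambda>\<rho>2. (\<phi>, \<rho>1, \<rho>2)) -` ?E} \<le> ?c"
    for f :: "'u \<Rightarrow> nat"
  proof -
    have "{y. f(q := y) \<in> (\<lambda>\<rho>2. (\<phi>, \<rho>1, \<rho>2)) -` ?E}
        = {y. (\<rho>1 (\<phi> q) + y) mod b = (\<rho>1 (\<phi> x) + f x) mod b}"
      using assms(3) by (auto simp: idl_hash_def)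
    then show ?thesis using prob_uniform_residue_class_le[OF assms(5,4)] by simp
  qed
  then show "measure_pmf.prob (Pi_pmf S 0 (\<lambda>_. pmf_of_set {..<L}) \<bind>
      (\<lambda>\<rho>2. return_pmf (\<phi>, \<rho>1, \<rho>2))) ?E \<le> ?c"
    unfolding map_pmf_def[symmetric] measure_map_pmf
    by (intro measure_Pi_pmf_le_given_other_coordinates[where a=q]) (use assms(1,2) in auto)
qed

lemma prob_idl_hash_hits_separated_le:
  fixes Phi :: "('u \<Rightarrow> 'h) pmf"
  assumes "finite S" "q \<in> S" "X \<subseteq> S" "0 < w" "w \<le> b"
    and lsh_separates: "\<And>\<phi> x. \<phi> \<in> set_pmf Phi \<Longrightarrow> x \<in> X \<Longrightarrow> \<phi> x \<noteq> \<phi> q"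
    and bucket: "\<And>\<phi> v. \<phi> \<in> set_pmf Phi \<Longrightarrow> card {x\<in>X. \<phi> x = v} \<le> w"
  shows "measure_pmf.prob (idl_rep_pmf Phi b L S) {h. idl_hash b h q \<in> idl_hash b h ` X}
    \<le> 1 - (1 - real w / real b) powr (real (card X) / real w)"
  (is "measure_pmf.prob _ ?E \<le> ?c")
  unfolding idl_rep_pmf_def
proof (rule measure_bind_pmf_le)
  fix \<phi> assume \<phi>: "\<phi> \<in> set_pmf Phi"
  let ?P1 = "Pi_pmf (\<phi> ` S) 0 (\<lambda>_. pmf_of_set {..<b})"
  let ?P2 = "Pi_pmf S 0 (\<lambda>_. pmf_of_set {..<L})"
  have swap: "?P1 \<bind> (\<lambda>\<rho>1. ?P2 \<bind> (\<lambda>\<rho>2. return_pmf (\<phi>, \<rho>1, \<rho>2)))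
      = ?P2 \<bind> (\<lambda>\<rho>2. map_pmf (\<lambda>\<rho>1. (\<phi>, \<rho>1, \<rho>2)) ?P1)"
    by (subst bind_commute_pmf) (simp add: map_pmf_def)
  have "measure_pmf.prob (map_pmf (\<lambda>\<rho>1. (\<phi>, \<rho>1, \<rho>2)) ?P1) ?E \<le> ?c" for \<rho>2
    unfolding measure_map_pmf
  proof (rule measure_Pi_pmf_le_given_coordinate[where a="\<phi> q"])
    fix y
    have "{f. f(\<phi> q := y) \<in> (\<lambda>\<rho>1. (\<phi>, \<rho>1, \<rho>2)) -` ?E}
        = {f. \<exists>x\<in>X. (f (\<phi> x) + \<rho>2 x) mod b = (y + \<rho>2 q) mod b}"
      using lsh_separates[OF \<phi>] by (auto simp: idl_hash_def image_iff) (metis fun_upd_other)+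
    also have "measure_pmf.prob (Pi_pmf (\<phi> ` S - {\<phi> q}) 0 (\<lambda>_. pmf_of_set {..<b})) \<dots> \<le> ?c"
    proof (rule prob_uniform_function_hits_le)
      show "\<phi> ` X \<subseteq> \<phi> ` S - {\<phi> q}" using assms(3) lsh_separates[OF \<phi>] by auto
    qed (simp_all add: assms(1,4,5) bucket[OF \<phi>] finite_subset[OF assms(3,1)])
    finally show "measure_pmf.prob (Pi_pmf (\<phi> ` S - {\<phi> q}) 0 (\<lambda>_. pmf_of_set {..<b}))
        {f. f(\<phi> q := y) \<in> (\<lambda>\<rho>1. (\<phi>, \<rho>1, \<rho>2)) -` ?E} \<le> ?c" .
  qed (use assms(1,2) in auto)
  then show "measure_pmf.prob (?P1 \<bind> (\<lambda>\<rho>1. ?P2 \<bind> (\<lambda>\<rho>2. return_pmf (\<phi>, \<rho>1, \<rho>2)))) ?E \<le> ?c"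
    unfolding swap by (rule measure_bind_pmf_le)
qed

lemma zeta_self: "zeta Phi x x = 1"
  by (simp add: zeta_def)

lemma zeta_nonneg: "zeta Phi x y \<ge> 0"
  by (simp add: zeta_def)

lemma zeta_eq_0_iff: "zeta Phi x y = 0 \<longleftrightarrow> (\<forall>\<phi>\<in>set_pmf Phi. \<phi> x \<noteq> \<phi> y)"
  by (auto simp: zeta_def measure_pmf_zero_iff)

lemma zeta_pos_iff: "zeta Phi x y > 0 \<longleftrightarrow> (\<exists>\<phi>\<in>set_pmf Phi. \<phi> x = \<phi> y)"
  unfolding less_le using zeta_nonneg[of Phi x y] zeta_eq_0_iff[of Phi x y] by auto

lemma card_pairwise_similar_le_window:
  assumes A1: "\<forall>i<length xs. \<forall>j<length xs. w1 \<le> i - j \<or> w1 \<le> j - i \<longrightarrow> zeta Phi (xs ! i) (xs ! j) = 0"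
    and "G \<subseteq> set xs" and similar: "\<And>x y. x \<in> G \<Longrightarrow> y \<in> G \<Longrightarrow> zeta Phi x y > 0"
  shows "card G \<le> w1"
proof (cases "G = {}")
  case False
  define I where "I = {i. i < length xs \<and> xs ! i \<in> G}"
  have G_eq: "G = (!) xs ` I"
  proof (intro equalityI subsetI)
    fix x assume "x \<in> G"
    then obtain i where "i < length xs" "xs ! i = x" using assms(2) by (meson in_set_conv_nth subsetD)
    then show "x \<in> (!) xs ` I" using \<open>x \<in> G\<close> by (auto simp: I_def)
  qed (auto simp: I_def)
  have "finite I" by (simp add: I_def)
  define i0 where "i0 = Min I"
  have "i0 \<in> I" and i0_le: "\<And>i. i \<in> I \<Longrightarrow> i0 \<le> i"
    using False G_eq \<open>finite I\<close> by (auto simp: i0_def)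
  have "I \<subseteq> {i0..<i0 + w1}"
  proof
    fix j assume "j \<in> I"
    then have "zeta Phi (xs ! j) (xs ! i0) \<noteq> 0"
      using similar \<open>i0 \<in> I\<close> by (fastforce simp: I_def)
    then have "\<not> w1 \<le> j - i0" using A1 \<open>j \<in> I\<close> \<open>i0 \<in> I\<close> by (auto simp: I_def)
    then show "j \<in> {i0..<i0 + w1}" using i0_le[OF \<open>j \<in> I\<close>] by simp
  qed
  then have "card I \<le> w1" using card_mono[of "{i0..<i0 + w1}"] by fastforce
  then show ?thesis unfolding G_eq using card_image_le[OF \<open>finite I\<close>, of "(!) xs"] by linarith
qed simp

lemma window_pos:
  assumes A1: "\<forall>i<length xs. \<forall>j<length xs. w1 \<le> i - j \<or> w1 \<le> j - i \<longrightarrow> zeta Phi (xs ! i) (xs ! j) = 0"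
    and "xs \<noteq> []"
  shows "w1 > 0"
proof (rule ccontr)
  assume "\<not> w1 > 0"
  then have "zeta Phi (xs ! 0) (xs ! 0) = 0" using A1[rule_format, of 0 0] \<open>xs \<noteq> []\<close> by simp
  then show False by (simp add: zeta_self)
qed

lemma card_lsh_bucket_le_window:
  assumes A1: "\<forall>i<length xs. \<forall>j<length xs. w1 \<le> i - j \<or> w1 \<le> j - i \<longrightarrow> zeta Phi (xs ! i) (xs ! j) = 0"
    and "X \<subseteq> set xs" "\<phi> \<in> set_pmf Phi"
  shows "card {x \<in> X. \<phi> x = v} \<le> w1"
  using assms(2,3)
  by (intro card_pairwise_similar_le_window[OF A1]) (auto simp: zeta_pos_iff intro!: bexI[where x=\<phi>])

lemma prob_idl_hash_hits_le_card:
  fixes Phi :: "('u \<Rightarrow> 'h) pmf"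
  assumes "finite S" "q \<in> S" "finite X" "q \<notin> X" "b > 0" "L > 0"
  shows "measure_pmf.prob (idl_rep_pmf Phi b L S) {h. idl_hash b h q \<in> idl_hash b h ` X}
    \<le> real (card X) * (1 / real b + 1 / real L)"
proof -
  have hits: "{h. idl_hash b h q \<in> idl_hash b h ` X} = (\<Union>x\<in>X. {h. idl_hash b h q = idl_hash b h x})"
    by auto
  have "measure_pmf.prob (idl_rep_pmf Phi b L S) {h. idl_hash b h q \<in> idl_hash b h ` X}
      \<le> (\<Sum>x\<in>X. measure_pmf.prob (idl_rep_pmf Phi b L S) {h. idl_hash b h q = idl_hash b h x})"
    unfolding hits by (rule measure_pmf.finite_measure_subadditive_finite[OF assms(3)]) simp
  also have "\<dots> \<le> (\<Sum>x\<in>X. 1 / real b + 1 / real L)"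
    using assms by (intro sum_mono prob_idl_hash_collision_le) auto
  finally show ?thesis by simp
qed

lemma prob_idl_hash_hits_dissimilar_le:
  fixes Phi :: "('u \<Rightarrow> 'h) pmf"
  assumes A1: "\<forall>i<length xs. \<forall>j<length xs. w1 \<le> i - j \<or> w1 \<le> j - i \<longrightarrow> zeta Phi (xs ! i) (xs ! j) = 0"
    and "w1 \<le> b" "finite S" "q \<in> S" "set xs \<subseteq> S"
  shows "measure_pmf.prob (idl_rep_pmf Phi b L S)
      {h. idl_hash b h q \<in> idl_hash b h ` {x \<in> set xs. zeta Phi q x = 0}}
    \<le> 1 - (1 - real w1 / real b) powr (real (length xs) / real w1)"
proof -
  define X where "X = {x \<in> set xs. zeta Phi q x = 0}"
  have base: "0 \<le> 1 - real w1 / real b" "1 - real w1 / real b \<le> 1"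
    using \<open>w1 \<le> b\<close> by (auto simp: divide_le_eq_1)
  have "measure_pmf.prob (idl_rep_pmf Phi b L S) {h. idl_hash b h q \<in> idl_hash b h ` X}
    \<le> 1 - (1 - real w1 / real b) powr (real (length xs) / real w1)"
  proof (cases "X = {}")
    case True
    have "(1 - real w1 / real b) powr (real (length xs) / real w1) \<le> 1"
      using base by (intro powr_le1) auto
    then show ?thesis using True by simp
  next
    case False
    then have "xs \<noteq> []" by (auto simp: X_def)
    then have "w1 > 0" by (rule window_pos[OF A1])
    have "real (card X) / real w1 \<le> real (length xs) / real w1"
      using card_mono[of "set xs" X] card_length[of xs] by (intro divide_right_mono) (auto simp: X_def)
    then have "(1 - real w1 / real b) powr (real (length xs) / real w1)
        \<le> (1 - real w1 / real b) powr (real (card X) / real w1)"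
      using base by (intro powr_mono')
    moreover have "measure_pmf.prob (idl_rep_pmf Phi b L S) {h. idl_hash b h q \<in> idl_hash b h ` X}
        \<le> 1 - (1 - real w1 / real b) powr (real (card X) / real w1)"
    proof (rule prob_idl_hash_hits_separated_le[OF assms(3,4) _ \<open>w1 > 0\<close> \<open>w1 \<le> b\<close>])
      show "X \<subseteq> S" using assms(5) by (auto simp: X_def)
      show "\<phi> x \<noteq> \<phi> q" if "\<phi> \<in> set_pmf Phi" "x \<in> X" for \<phi> x
        using that zeta_eq_0_iff[of Phi q x] by (auto simp: X_def)
      show "card {x \<in> X. \<phi> x = v} \<le> w1" if "\<phi> \<in> set_pmf Phi" for \<phi> v
        by (rule card_lsh_bucket_le_window[OF A1 _ that]) (auto simp: X_def)
    qed
    ultimately show ?thesis by linarith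
  qed
  then show ?thesis by (simp add: X_def)
qed

lemma prob_idl_hash_hits_le:
  fixes Phi :: "('u \<Rightarrow> 'h) pmf"
  assumes A1: "\<forall>i<length xs. \<forall>j<length xs. w1 \<le> i - j \<or> w1 \<le> j - i \<longrightarrow> zeta Phi (xs ! i) (xs ! j) = 0"
    and A2: "card {x \<in> set xs. zeta Phi q x > 0} \<le> w2"
    and "q \<notin> set xs" "b > 0" "L > 0" "w1 \<le> b"
  shows "measure_pmf.prob (idl_rep_pmf Phi b L (insert q (set xs))) {h. idl_hash b h q \<in> idl_hash b h ` set xs}
    \<le> real w2 * (1 / real L + 1 / real b)
      + 2 * (1 - (1 - real w1 / real b) powr (real (length xs) / (2 * real w1)))"
proof -
  define R where "R = idl_rep_pmf Phi b L (insert q (set xs))"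
  define Hits :: "'u set \<Rightarrow> (('u \<Rightarrow> 'h) \<times> ('h \<Rightarrow> nat) \<times> ('u \<Rightarrow> nat)) set"
    where "Hits X = {h. idl_hash b h q \<in> idl_hash b h ` X}" for X
  define y where "y = (1 - real w1 / real b) powr (real (length xs) / (2 * real w1))"
  let ?similar = "{x \<in> set xs. zeta Phi q x > 0}"
  let ?dissimilar = "{x \<in> set xs. zeta Phi q x = 0}"
  have "set xs = ?similar \<union> ?dissimilar"
    using zeta_nonneg[of Phi q] by (auto simp: order_less_le)
  then have split: "Hits (set xs) = Hits ?similar \<union> Hits ?dissimilar"
    unfolding Hits_def by blast
  have "measure_pmf.prob R (Hits (set xs))
      \<le> measure_pmf.prob R (Hits ?similar) + measure_pmf.prob R (Hits ?dissimilar)"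
    unfolding split by (rule measure_Un_le) simp_all
  also have "measure_pmf.prob R (Hits ?similar) \<le> real w2 * (1 / real L + 1 / real b)"
  proof -
    have "measure_pmf.prob R (Hits ?similar) \<le> real (card ?similar) * (1 / real b + 1 / real L)"
      unfolding R_def Hits_def using assms(3-5) by (intro prob_idl_hash_hits_le_card) auto
    also have "\<dots> \<le> real w2 * (1 / real b + 1 / real L)"
      using A2 by (intro mult_right_mono) auto
    finally show ?thesis by (simp add: add.commute)
  qed
  also have "measure_pmf.prob R (Hits ?dissimilar) \<le> 1 - y * y"
  proof -
    have "measure_pmf.prob R (Hits ?dissimilar)
        \<le> 1 - (1 - real w1 / real b) powr (real (length xs) / real w1)"
      unfolding R_def Hits_def by (rule prob_idl_hash_hits_dissimilar_le[OF A1 \<open>w1 \<le> b\<close>]) auto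
    \<comment> \<open>also for w1 = 0, where both exponents are 0 since x / 0 = 0\<close>
    also have "(1 - real w1 / real b) powr (real (length xs) / real w1) = y * y"
      unfolding y_def powr_add[symmetric] by (simp add: field_simps)
    finally show ?thesis .
  qed
  also have "1 - y * y \<le> 2 * (1 - y)"
    using zero_le_power2[of "1 - y"] by (simp add: power2_eq_square algebra_simps)
  finally show ?thesis by (simp add: R_def Hits_def y_def)
qed

lemma idl_fp_rate_eq_power:
  "idl_fp_rate Phi m \<eta> L xs q
    = measure_pmf.prob (idl_rep_pmf Phi (m div \<eta>) L (insert q (set xs)))
        {h. idl_hash (m div \<eta>) h q \<in> idl_hash (m div \<eta>) h ` set xs} ^ \<eta>"
proof -
  let ?R = "idl_rep_pmf Phi (m div \<eta>) L (insert q (set xs))"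
  let ?E = "{h. idl_hash (m div \<eta>) h q \<in> idl_hash (m div \<eta>) h ` set xs}"
  have query: "{hs. bloom_query m \<eta> hs xs q} = Pi {..<\<eta>} (\<lambda>_. ?E)"
    by (auto simp: bloom_query_def bloom_bits_def Pi_def)
  have "idl_fp_rate Phi m \<eta> L xs q = measure_pmf.prob (Pi_pmf {..<\<eta>} undefined (\<lambda>_. ?R)) (Pi {..<\<eta>} (\<lambda>_. ?E))"
    unfolding idl_fp_rate_def idl_filter_pmf_def query ..
  also have "\<dots> = (\<Prod>j\<in>{..<\<eta>}. measure_pmf.prob ?R ?E)"
    by (rule measure_Pi_pmf_Pi) simp
  finally show ?thesis by simp
qed

theorem theorem2:
  fixes Phi :: "('u \<Rightarrow> 'h) pmf" and m \<eta> L w1 w2 :: nat and xs :: "'u list" and q :: 'u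
  assumes "\<eta> > 0" and "L > 0" and "\<eta> dvd m" and "m > 0"
    and "real w1 * real \<eta> \<le> real m"
    and "q \<notin> set xs"
    and A1: "\<forall>i<length xs. \<forall>j<length xs. w1 \<le> i - j \<or> w1 \<le> j - i \<longrightarrow> zeta Phi (xs ! i) (xs ! j) = 0"
    and A2: "card {x \<in> set xs. zeta Phi q x > 0} \<le> w2"
  shows "idl_fp_rate Phi m \<eta> L xs q \<le>
    (real w2 * (1 / real L + real \<eta> / real m)
      + 2 * (1 - (1 - real w1 * real \<eta> / real m) powr (real (length xs) / (2 * real w1)))) ^ \<eta>"
proof -
  define b where "b = m div \<eta>"
  have b: "real b = real m / real \<eta>"
    using \<open>\<eta> dvd m\<close> by (simp add: b_def real_of_nat_div)
  then have "b > 0" using assms(1,4) of_nat_0_less_iff by fastforce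
  have "real \<eta> * real w1 \<le> real \<eta> * real b" using assms(1,5) b by (simp add: mult.commute)
  then have "w1 \<le> b" using assms(1) by simp
  have "measure_pmf.prob (idl_rep_pmf Phi b L (insert q (set xs))) {h. idl_hash b h q \<in> idl_hash b h ` set xs}
    \<le> real w2 * (1 / real L + real \<eta> / real m)
      + 2 * (1 - (1 - real w1 * real \<eta> / real m) powr (real (length xs) / (2 * real w1)))"
    using prob_idl_hash_hits_le[OF A1 A2 \<open>q \<notin> set xs\<close> \<open>b > 0\<close> \<open>L > 0\<close> \<open>w1 \<le> b\<close>] b by simp
  then show ?thesis
    unfolding idl_fp_rate_eq_power b_def[symmetric] by (intro power_mono) simp_all
qed

end
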